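(* Let $\Omega_x,\Omega_y\subset\mathbb{R}$ be bounded domains, $\Omega=\Omega_x\times\Omega_y$, and $f\in L^2(\Omega)$ with $f\neq 0$. Then there exists $(r,s)\in H^1_0(\Omega_x)\times H^1_0(\Omega_y)$ such that $\mathcal{E}(r\otimes s)<0$, where for $u\in H^1_0(\Omega)$, $$\mathcal{E}(u)=\frac12\int_\Omega|\nabla u|^2-\int_\Omega f u.$$
   Context: $(r\otimes s)(x,y)=r(x)s(y)$. *)

theory Defs
  imports "HOL-Analysis.Analysis"
begin

fun Ck :: "nat \<Rightarrow> ('a::real_normed_vector \<Rightarrow> real) \<Rightarrow> bool" where
  "Ck 0 f = continuous_on UNIV f"
| "Ck (Suc k) f = ((\<forall>x. f differentiable (at x)) \<and>
      (\<forall>v. Ck k (\<lambda>x. frechet_derivative f (at x) v)))"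

definition smooth :: "('a::real_normed_vector \<Rightarrow> real) \<Rightarrow> bool" where
  "smooth f \<longleftrightarrow> (\<forall>k. Ck k f)"

definition test_fun :: "'a::euclidean_space set \<Rightarrow> ('a \<Rightarrow> real) \<Rightarrow> bool" where
  "test_fun U \<phi> \<longleftrightarrow> smooth \<phi> \<and> compact (closure {x. \<phi> x \<noteq> 0}) \<and> closure {x. \<phi> x \<noteq> 0} \<subseteq> U"

definition grad :: "('a::euclidean_space \<Rightarrow> real) \<Rightarrow> 'a \<Rightarrow> 'a" where
  "grad \<phi> z = (\<Sum>i\<in>Basis. frechet_derivative \<phi> (at z) i *\<^sub>R i)"

definition L2 :: "'a::euclidean_space set \<Rightarrow> ('a \<Rightarrow> real) \<Rightarrow> bool" where
  "L2 U u \<longleftrightarrow> set_borel_measurable lborel U u \<and> set_integrable lborel U (\<lambda>z. (u z)\<^sup>2)"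

definition weak_grad :: "'a::euclidean_space set \<Rightarrow> ('a \<Rightarrow> real) \<Rightarrow> ('a \<Rightarrow> 'a) \<Rightarrow> bool" where
  "weak_grad U u g \<longleftrightarrow> L2 U u \<and> (\<forall>i\<in>Basis. L2 U (\<lambda>z. g z \<bullet> i)) \<and>
     (\<forall>\<phi>. test_fun U \<phi> \<longrightarrow> (\<forall>i\<in>Basis.
        (LINT z:U|lborel. u z * frechet_derivative \<phi> (at z) i) = - (LINT z:U|lborel. (g z \<bullet> i) * \<phi> z)))"

definition H10 :: "'a::euclidean_space set \<Rightarrow> ('a \<Rightarrow> real) \<Rightarrow> bool" where
  "H10 U u \<longleftrightarrow> (\<exists>g. weak_grad U u g \<and>
     (\<exists>\<phi>. (\<forall>n. test_fun U (\<phi> n)) \<and>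
        (\<lambda>n. LINT z:U|lborel. (\<phi> n z - u z)\<^sup>2) \<longlonglongrightarrow> 0 \<and>
        (\<lambda>n. LINT z:U|lborel. (norm (grad (\<phi> n) z - g z))\<^sup>2) \<longlonglongrightarrow> 0))"

text \<open>The weak gradient (unique a.e. when it exists).\<close>
definition wgrad :: "'a::euclidean_space set \<Rightarrow> ('a \<Rightarrow> real) \<Rightarrow> 'a \<Rightarrow> 'a" where
  "wgrad U u = (SOME g. weak_grad U u g)"

definition energy :: "'a::euclidean_space set \<Rightarrow> ('a \<Rightarrow> real) \<Rightarrow> ('a \<Rightarrow> real) \<Rightarrow> real" where
  "energy U f u = (1/2) * (LINT z:U|lborel. (norm (wgrad U u z))\<^sup>2) - (LINT z:U|lborel. f z * u z)"

definition tensor :: "(real \<Rightarrow> real) \<Rightarrow> (real \<Rightarrow> real) \<Rightarrow> real \<times> real \<Rightarrow> real" where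
  "tensor r s = (\<lambda>(x, y). r x * s y)"

end

theory Submission
  imports Defs
begin

text \<open>If \<open>f\<close> were orthogonal to every product \<open>r \<otimes> s\<close> of test functions, then, approximating
  indicators of open boxes boundedly and pointwise by such products, \<open>f\<close> would integrate to
  zero over every box in \<open>\<Omega>\<close> and hence vanish almost everywhere. So some \<open>r \<otimes> s\<close> has
  \<open>B = \<integral>f (r \<otimes> s) \<noteq> 0\<close>. Test functions lie in \<open>H\<^sup>1\<^sub>0\<close> with their classical gradient as weak
  gradient, and the energy of \<open>c r \<otimes> s\<close> is the quadratic \<open>c\<^sup>2 A / 2 - c B\<close>, which is negative
  for a suitable \<open>c\<close>.\<close>

section \<open>Smooth functions of one variable\<close>

fun real_Ck :: "nat \<Rightarrow> (real \<Rightarrow> real) \<Rightarrow> bool" where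
  "real_Ck 0 f = True"
| "real_Ck (Suc k) f \<longleftrightarrow> (\<forall>x. f field_differentiable at x) \<and> real_Ck k (deriv f)"

definition real_smooth :: "(real \<Rightarrow> real) \<Rightarrow> bool" where
  "real_smooth f \<longleftrightarrow> (\<forall>k. real_Ck k f)"

lemma real_Ck_SucD: "real_Ck (Suc k) f \<Longrightarrow> real_Ck k f"
  by (induction k arbitrary: f) auto

lemma real_Ck_const: "real_Ck k (\<lambda>x. c)"
  by (induction k arbitrary: c) auto

lemma real_Ck_add: "real_Ck k f \<Longrightarrow> real_Ck k g \<Longrightarrow> real_Ck k (\<lambda>x. f x + g x)"
proof (induction k arbitrary: f g)
  case (Suc k)
  then have "deriv (\<lambda>x. f x + g x) = (\<lambda>x. deriv f x + deriv g x)"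
    by (simp add: fun_eq_iff)
  with Suc show ?case by (auto intro: field_differentiable_add)
qed simp

lemma real_Ck_mult: "real_Ck k f \<Longrightarrow> real_Ck k g \<Longrightarrow> real_Ck k (\<lambda>x. f x * g x)"
proof (induction k arbitrary: f g)
  case (Suc k)
  then have "deriv (\<lambda>x. f x * g x) = (\<lambda>x. f x * deriv g x + deriv f x * g x)"
    by (simp add: fun_eq_iff)
  moreover have "real_Ck k (\<lambda>x. f x * deriv g x + deriv f x * g x)"
    using Suc real_Ck_SucD[OF Suc.prems(1)] real_Ck_SucD[OF Suc.prems(2)]
    by (intro real_Ck_add Suc.IH) auto
  ultimately show ?case using Suc.prems by (auto intro: field_differentiable_mult)
qed simp

lemma real_Ck_compose_affine: "real_Ck k f \<Longrightarrow> real_Ck k (\<lambda>x. f (a * x + b))"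
proof (induction k arbitrary: f)
  case (Suc k)
  then have "deriv (\<lambda>x. f (a * x + b)) = (\<lambda>x. a * deriv f (a * x + b))"
    by (simp add: fun_eq_iff deriv_compose_linear')
  moreover have "(\<lambda>x. f (a * x + b)) field_differentiable at x" for x
  proof -
    have "((\<lambda>x. a * x + b) has_real_derivative a) (at x)"
      by (auto intro!: derivative_eq_intros)
    then have "(\<lambda>x. a * x + b) field_differentiable at x"
      by (auto simp: field_differentiable_def)
    then show ?thesis
      using Suc.prems field_differentiable_compose[of "\<lambda>x. a * x + b" x f] by (simp add: o_def)
  qed
  ultimately show ?case using Suc by (auto intro: real_Ck_mult real_Ck_const)
qed simp

lemma real_smooth_const: "real_smooth (\<lambda>x. c)"
  by (simp add: real_smooth_def real_Ck_const)

lemma real_smooth_add: "real_smooth f \<Longrightarrow> real_smooth g \<Longrightarrow> real_smooth (\<lambda>x. f x + g x)"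
  by (simp add: real_smooth_def real_Ck_add)

lemma real_smooth_mult: "real_smooth f \<Longrightarrow> real_smooth g \<Longrightarrow> real_smooth (\<lambda>x. f x * g x)"
  by (simp add: real_smooth_def real_Ck_mult)

lemma real_smooth_cmult: "real_smooth f \<Longrightarrow> real_smooth (\<lambda>x. c * f x)"
  by (intro real_smooth_mult real_smooth_const)

lemma real_smooth_diff: "real_smooth f \<Longrightarrow> real_smooth g \<Longrightarrow> real_smooth (\<lambda>x. f x - g x)"
  using real_smooth_add[of f "\<lambda>x. (-1) * g x"] real_smooth_cmult[of g "-1"] by simp

lemma real_smooth_power: "real_smooth f \<Longrightarrow> real_smooth (\<lambda>x. f x ^ n)"
  by (induction n) (auto intro: real_smooth_const real_smooth_mult)

lemma real_smooth_compose_affine: "real_smooth f \<Longrightarrow> real_smooth (\<lambda>x. f (a * x + b))"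
  by (simp add: real_smooth_def real_Ck_compose_affine)

lemma real_smooth_deriv: "real_smooth f \<Longrightarrow> real_smooth (deriv f)"
  by (simp add: real_smooth_def) (metis real_Ck.simps(2))

lemma real_smooth_DERIV: "real_smooth f \<Longrightarrow> (f has_real_derivative deriv f x) (at x)"
  by (metis DERIV_deriv_iff_field_differentiable real_Ck.simps(2) real_smooth_def)

lemma real_smooth_has_derivative:
  "real_smooth f \<Longrightarrow> (f has_derivative (\<lambda>h. deriv f x * h)) (at x)"
  using real_smooth_DERIV by (simp add: has_field_derivative_def)

definition exp_inv_poly :: "real poly \<Rightarrow> real \<Rightarrow> real" where
  "exp_inv_poly p x = (if 0 < x then poly p (inverse x) * exp (- inverse x) else 0)"

text \<open>With \<open>t = 1/x\<close>, the derivative of \<open>p(t) e\<^sup>-\<^sup>t\<close> is \<open>t\<^sup>2 (p(t) - p'(t)) e\<^sup>-\<^sup>t\<close>.\<close>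
definition exp_inv_poly_deriv :: "real poly \<Rightarrow> real poly" where
  "exp_inv_poly_deriv p = monom 1 2 * (p - pderiv p)"

lemma exp_inv_poly_has_derivative_pos:
  assumes "0 < x"
  shows "(exp_inv_poly p has_real_derivative exp_inv_poly (exp_inv_poly_deriv p) x) (at x)"
proof -
  have "((\<lambda>x. poly p (inverse x) * exp (- inverse x)) has_real_derivative
      exp_inv_poly (exp_inv_poly_deriv p) x) (at x)"
    using assms
    by (auto intro!: derivative_eq_intros
        simp: exp_inv_poly_def exp_inv_poly_deriv_def poly_monom power2_eq_square algebra_simps)
  then show ?thesis
    by (rule has_field_derivative_transform_within_open[where S="{0<..}"])
       (use assms in \<open>auto simp: exp_inv_poly_def\<close>)
qed

lemma tendsto_poly_times_exp_neg_at_top: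
  fixes p :: "real poly"
  shows "((\<lambda>t. t * poly p t * exp (- t)) \<longlongrightarrow> 0) at_top"
proof -
  have "((\<lambda>t. \<Sum>i\<le>degree p. coeff p i * (t ^ Suc i / exp t)) \<longlongrightarrow> (\<Sum>i\<le>degree p. coeff p i * 0)) at_top"
    by (intro tendsto_sum tendsto_mult tendsto_const tendsto_power_div_exp_0)
  moreover have "(\<lambda>t. \<Sum>i\<le>degree p. coeff p i * (t ^ Suc i / exp t)) = (\<lambda>t. t * poly p t * exp (- t))"
    by (auto simp: poly_altdef sum_distrib_left sum_distrib_right exp_minus field_simps)
  ultimately show ?thesis by simp
qed

lemma exp_inv_poly_has_derivative_0:
  "(exp_inv_poly p has_real_derivative exp_inv_poly (exp_inv_poly_deriv p) 0) (at 0)"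
proof -
  let ?q = "\<lambda>y. (exp_inv_poly p y - exp_inv_poly p 0) / (y - 0)"
  have "\<forall>\<^sub>F y in at_left 0. y \<in> {-1<..<0::real}"
    by (rule eventually_at_left_real) simp
  then have "\<forall>\<^sub>F y in at_left 0. ?q y = 0"
    by eventually_elim (simp add: exp_inv_poly_def)
  then have "(?q \<longlongrightarrow> 0) (at_left 0)"
    by (rule tendsto_eventually)
  moreover have "(?q \<longlongrightarrow> 0) (at_right 0)"
  proof (rule Lim_transform_eventually)
    show "((\<lambda>y. inverse y * poly p (inverse y) * exp (- inverse y)) \<longlongrightarrow> 0) (at_right 0)"
      by (rule filterlim_compose[OF tendsto_poly_times_exp_neg_at_top filterlim_inverse_at_top_right])
    show "\<forall>\<^sub>F y in at_right 0. inverse y * poly p (inverse y) * exp (- inverse y) = ?q y"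
      using eventually_at_right_less[of "0::real"]
      by eventually_elim (simp add: exp_inv_poly_def field_simps)
  qed
  moreover have "exp_inv_poly (exp_inv_poly_deriv p) 0 = 0"
    by (simp add: exp_inv_poly_def)
  ultimately show ?thesis
    by (simp add: has_field_derivative_iff filterlim_at_split)
qed

lemma exp_inv_poly_has_derivative:
  "(exp_inv_poly p has_real_derivative exp_inv_poly (exp_inv_poly_deriv p) x) (at x)"
proof (cases x "0::real" rule: linorder_cases)
  case less
  have "(exp_inv_poly p has_real_derivative 0) (at x)"
    by (rule has_field_derivative_transform_within_open[of "\<lambda>x. 0" 0 x "{..<0}"])
       (use less in \<open>auto simp: exp_inv_poly_def\<close>)
  with less show ?thesis by (simp add: exp_inv_poly_def)
next
  case equal
  then show ?thesis by (simp add: exp_inv_poly_has_derivative_0)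
next
  case greater
  then show ?thesis by (rule exp_inv_poly_has_derivative_pos)
qed

lemma real_smooth_exp_inv_poly: "real_smooth (exp_inv_poly p)"
  unfolding real_smooth_def
proof
  fix k show "real_Ck k (exp_inv_poly p)"
  proof (induction k arbitrary: p)
    case (Suc k)
    have "deriv (exp_inv_poly p) = exp_inv_poly (exp_inv_poly_deriv p)"
      using exp_inv_poly_has_derivative DERIV_imp_deriv by blast
    moreover have "exp_inv_poly p field_differentiable at x" for x
      using exp_inv_poly_has_derivative field_differentiable_def by blast
    ultimately show ?case using Suc by simp
  qed simp
qed

definition exp_neg_inv :: "real \<Rightarrow> real" where
  "exp_neg_inv x = (if 0 < x then exp (- inverse x) else 0)"

lemma real_smooth_exp_neg_inv: "real_smooth exp_neg_inv"
proof -
  have "exp_neg_inv = exp_inv_poly 1"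
    by (auto simp: exp_neg_inv_def exp_inv_poly_def)
  then show ?thesis by (metis real_smooth_exp_inv_poly)
qed

definition bump :: "real \<Rightarrow> real \<Rightarrow> real \<Rightarrow> real" where
  "bump a b x = exp_neg_inv (x - a) * exp_neg_inv (b - x)"

lemma real_smooth_bump: "real_smooth (bump a b)"
proof -
  have "real_smooth (\<lambda>x. exp_neg_inv (1 * x + - a) * exp_neg_inv ((-1) * x + b))"
    by (intro real_smooth_mult real_smooth_compose_affine real_smooth_exp_neg_inv)
  then show ?thesis by (simp add: bump_def[abs_def])
qed

lemma bump_pos: "a < x \<Longrightarrow> x < b \<Longrightarrow> 0 < bump a b x"
  by (simp add: bump_def exp_neg_inv_def)

lemma bump_eq_0: "x \<notin> {a<..<b} \<Longrightarrow> bump a b x = 0"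
  by (auto simp: bump_def exp_neg_inv_def)

lemma exp_neg_inv_bounds: "0 \<le> exp_neg_inv x" "exp_neg_inv x \<le> 1"
  by (simp_all add: exp_neg_inv_def)

lemma bump_bounds: "0 \<le> bump a b x" "bump a b x \<le> 1"
  unfolding bump_def by (simp_all add: exp_neg_inv_bounds mult_le_one)

definition interval_approx :: "real \<Rightarrow> real \<Rightarrow> nat \<Rightarrow> real \<Rightarrow> real" where
  "interval_approx a b n x = 1 - (1 - bump a b x) ^ n"

lemma real_smooth_interval_approx: "real_smooth (interval_approx a b n)"
  unfolding interval_approx_def
  by (intro real_smooth_diff real_smooth_const real_smooth_power real_smooth_bump)

lemma interval_approx_eq_0: "x \<notin> {a<..<b} \<Longrightarrow> interval_approx a b n x = 0"
  by (simp add: interval_approx_def bump_eq_0)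

lemma abs_interval_approx_le: "\<bar>interval_approx a b n x\<bar> \<le> 1"
  using bump_bounds[of a b x] power_le_one[of "1 - bump a b x" n]
  by (simp add: interval_approx_def)

lemma interval_approx_tendsto: "(\<lambda>n. interval_approx a b n x) \<longlonglongrightarrow> indicator {a<..<b} x"
proof (cases "x \<in> {a<..<b}")
  case True
  then have "0 < bump a b x" by (simp add: bump_pos)
  then have "norm (1 - bump a b x) < 1"
    using bump_bounds[of a b x] by simp
  then have "(\<lambda>n. 1 - (1 - bump a b x) ^ n) \<longlonglongrightarrow> 1 - 0"
    by (intro tendsto_diff tendsto_const LIMSEQ_power_zero)
  with True show ?thesis by (simp add: interval_approx_def)
next
  case False
  then show ?thesis by (simp add: interval_approx_eq_0)
qed

section \<open>Tensor products and test functions\<close>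

lemma frechet_derivative_real:
  "(f has_real_derivative d) (at x) \<Longrightarrow> frechet_derivative f (at x) v = d * v"
  by (metis frechet_derivative_at has_field_derivative_def)

lemma frechet_derivative_eq_0_on_open:
  assumes "open S" "z \<in> S" "\<And>x. x \<in> S \<Longrightarrow> w x = 0"
  shows "frechet_derivative w (at z) = (\<lambda>h. 0)"
proof -
  have "((\<lambda>x. 0) has_derivative (\<lambda>h. 0)) (at z)" by simp
  then have "(w has_derivative (\<lambda>h. 0)) (at z)"
    by (rule has_derivative_transform_within_open[OF _ assms(1,2)]) (use assms(3) in auto)
  then show ?thesis by (metis frechet_derivative_at)
qed

lemma frechet_derivative_eq_0_outside_support:
  assumes "closed K" "x \<notin> K" "\<And>z. z \<notin> K \<Longrightarrow> w z = 0"
  shows "frechet_derivative w (at x) v = 0"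
  using frechet_derivative_eq_0_on_open[of "- K" x w] assms by (auto simp: open_Compl)

lemma Ck_real_smooth: "real_smooth f \<Longrightarrow> Ck k f"
proof (induction k arbitrary: f)
  case 0
  then show ?case
    by (auto intro!: continuous_at_imp_continuous_on DERIV_isCont real_smooth_DERIV)
next
  case (Suc k)
  have "(\<lambda>x. frechet_derivative f (at x) v) = (\<lambda>x. deriv f x * v)" for v
    using frechet_derivative_real[OF real_smooth_DERIV[OF Suc.prems]] by auto
  moreover have "real_smooth (\<lambda>x. deriv f x * v)" for v
    using Suc.prems by (intro real_smooth_mult real_smooth_deriv real_smooth_const)
  moreover have "f differentiable (at x)" for x
    using real_smooth_DERIV[OF Suc.prems] real_differentiable_def by blast
  ultimately show ?case using Suc.IH by auto
qed

lemma smooth_real_smooth: "real_smooth f \<Longrightarrow> smooth f"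
  by (simp add: smooth_def Ck_real_smooth)

lemma tensor_eq: "tensor r s = (\<lambda>z. r (fst z) * s (snd z))"
  by (auto simp: tensor_def fun_eq_iff)

lemma tensor_has_derivative:
  assumes "real_smooth r" "real_smooth s"
  shows "(tensor r s has_derivative
     (\<lambda>v. deriv r (fst z) * fst v * s (snd z) + r (fst z) * (deriv s (snd z) * snd v))) (at z)"
proof -
  have "((\<lambda>z. r (fst z)) has_derivative (\<lambda>v. deriv r (fst z) * fst v)) (at z)"
    using diff_chain_at[OF has_derivative_fst[OF has_derivative_ident]
        real_smooth_has_derivative[OF assms(1)]] by (simp add: o_def)
  moreover have "((\<lambda>z. s (snd z)) has_derivative (\<lambda>v. deriv s (snd z) * snd v)) (at z)"
    using diff_chain_at[OF has_derivative_snd[OF has_derivative_ident]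
        real_smooth_has_derivative[OF assms(2)]] by (simp add: o_def)
  ultimately have "((\<lambda>z. r (fst z) * s (snd z)) has_derivative
      (\<lambda>v. r (fst z) * (deriv s (snd z) * snd v) + deriv r (fst z) * fst v * s (snd z))) (at z)"
    by (rule has_derivative_mult)
  then show ?thesis by (simp add: tensor_eq add.commute)
qed

fun tensor_sum :: "((real \<Rightarrow> real) \<times> (real \<Rightarrow> real)) list \<Rightarrow> real \<times> real \<Rightarrow> real" where
  "tensor_sum [] z = 0"
| "tensor_sum ((r, s) # L) z = tensor r s z + tensor_sum L z"

text \<open>Finite sums of tensor products are closed under directional derivatives, which makes
  the smoothness of \<open>tensor r s\<close> provable by induction on the order.\<close>
fun tensor_sum_deriv :: "real \<times> real \<Rightarrow> ((real \<Rightarrow> real) \<times> (real \<Rightarrow> real)) list \<Rightarrow>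
    ((real \<Rightarrow> real) \<times> (real \<Rightarrow> real)) list" where
  "tensor_sum_deriv v [] = []"
| "tensor_sum_deriv v ((r, s) # L) =
     (\<lambda>x. deriv r x * fst v, s) # (r, \<lambda>y. deriv s y * snd v) # tensor_sum_deriv v L"

lemma tensor_sum_has_derivative:
  "\<forall>(r, s)\<in>set L. real_smooth r \<and> real_smooth s \<Longrightarrow>
    (tensor_sum L has_derivative (\<lambda>v. tensor_sum (tensor_sum_deriv v L) z)) (at z)"
proof (induction L)
  case (Cons rs L)
  obtain r s where rs: "rs = (r, s)" by fastforce
  with Cons.prems have "real_smooth r" "real_smooth s" "\<forall>(r, s)\<in>set L. real_smooth r \<and> real_smooth s"
    by auto
  from has_derivative_add[OF tensor_has_derivative[OF this(1,2)] Cons.IH[OF this(3)]]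
  show ?case by (simp add: rs tensor_eq algebra_simps)
next
  case Nil
  have "tensor_sum [] = (\<lambda>z. 0)" by (simp add: fun_eq_iff)
  then show ?case by simp
qed

lemma Ck_tensor_sum: "\<forall>(r, s)\<in>set L. real_smooth r \<and> real_smooth s \<Longrightarrow> Ck k (tensor_sum L)"
proof (induction k arbitrary: L)
  case 0
  then show ?case
    by (auto intro!: continuous_at_imp_continuous_on has_derivative_continuous tensor_sum_has_derivative)
next
  case (Suc k)
  have "frechet_derivative (tensor_sum L) (at z) v = tensor_sum (tensor_sum_deriv v L) z" for z v
    using fun_cong[OF frechet_derivative_at[OF tensor_sum_has_derivative[OF Suc.prems]], of v] by simp
  then have "(\<lambda>z. frechet_derivative (tensor_sum L) (at z) v) = tensor_sum (tensor_sum_deriv v L)" for v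
    by auto
  moreover have "\<forall>(r, s)\<in>set (tensor_sum_deriv v L). real_smooth r \<and> real_smooth s" for v
    using Suc.prems
    by (induction v L rule: tensor_sum_deriv.induct)
       (auto intro!: real_smooth_mult real_smooth_deriv real_smooth_const)
  moreover have "tensor_sum L differentiable (at z)" for z
    using tensor_sum_has_derivative[OF Suc.prems] differentiable_def by blast
  ultimately show ?case using Suc.IH by simp
qed

lemma smooth_tensor:
  assumes "real_smooth r" "real_smooth s"
  shows "smooth (tensor r s)"
proof -
  have "tensor_sum [(r, s)] = tensor r s" by (simp add: fun_eq_iff)
  then show ?thesis using Ck_tensor_sum[of "[(r, s)]"] assms by (simp add: smooth_def)
qed

lemma
  assumes "smooth \<phi>"
  shows smooth_differentiable: "\<phi> differentiable (at x)"
    and smooth_continuous_on: "continuous_on UNIV \<phi>"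
    and smooth_continuous_on_frechet_derivative:
      "continuous_on UNIV (\<lambda>z. frechet_derivative \<phi> (at z) v)"
proof -
  have "Ck 0 \<phi>" "Ck (Suc 0) \<phi>"
    using assms unfolding smooth_def by blast+
  then show "\<phi> differentiable (at x)" "continuous_on UNIV \<phi>"
    "continuous_on UNIV (\<lambda>z. frechet_derivative \<phi> (at z) v)"
    by simp_all
qed

lemma not_in_closure_support: "x \<notin> closure {x. \<phi> x \<noteq> 0} \<Longrightarrow> \<phi> x = 0"
  by (metis (mono_tags) closure_subset mem_Collect_eq subsetD)

lemma test_fun_bounded:
  assumes "test_fun U \<phi>"
  obtains M where "\<And>z. \<bar>\<phi> z\<bar> \<le> M"
proof -
  let ?K = "closure {x. \<phi> x \<noteq> 0}"
  have "smooth \<phi>" "compact ?K"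
    using assms by (simp_all add: test_fun_def)
  then have "compact (\<phi> ` ?K)"
    using compact_continuous_image continuous_on_subset smooth_continuous_on by blast
  then obtain M where M: "\<And>z. z \<in> ?K \<Longrightarrow> norm (\<phi> z) \<le> M"
    using compact_imp_bounded[of "\<phi> ` ?K"] unfolding bounded_iff by blast
  show ?thesis
  proof
    fix z show "\<bar>\<phi> z\<bar> \<le> max M 0"
      using M[of z] not_in_closure_support[of z \<phi>] by (cases "z \<in> ?K") simp_all
  qed
qed

lemma test_fun_interval_approx:
  assumes "{a..b} \<subseteq> X"
  shows "test_fun X (interval_approx a b n)"
proof -
  have sub: "{x. interval_approx a b n x \<noteq> 0} \<subseteq> {a..b}"
  proof
    fix x assume "x \<in> {x. interval_approx a b n x \<noteq> 0}"
    then have "x \<in> {a<..<b}" using interval_approx_eq_0[of x a b n] by auto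
    then show "x \<in> {a..b}" by simp
  qed
  then have "bounded {x. interval_approx a b n x \<noteq> 0}"
    by (rule bounded_subset[OF bounded_closed_interval])
  moreover have "closure {x. interval_approx a b n x \<noteq> 0} \<subseteq> {a..b}"
    using sub by (simp add: closure_minimal)
  ultimately show ?thesis
    using assms by (simp add: test_fun_def smooth_real_smooth real_smooth_interval_approx)
qed

lemma test_fun_tensor:
  assumes "real_smooth r" "real_smooth s" "test_fun X r" "test_fun Y s"
  shows "test_fun (X \<times> Y) (tensor r s)"
proof -
  have "{z. tensor r s z \<noteq> 0} = {x. r x \<noteq> 0} \<times> {y. s y \<noteq> 0}"
    by (auto simp: tensor_def)
  moreover have "compact (closure {x. r x \<noteq> 0} \<times> closure {y. s y \<noteq> 0})"
    using assms(3,4) by (intro compact_Times) (simp_all add: test_fun_def)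
  moreover have "closure {x. r x \<noteq> 0} \<times> closure {y. s y \<noteq> 0} \<subseteq> X \<times> Y"
    using assms(3,4) by (intro Sigma_mono) (simp_all add: test_fun_def)
  ultimately show ?thesis
    using assms(1,2) by (simp add: test_fun_def closure_Times smooth_tensor)
qed

lemma test_fun_cmult:
  assumes "c \<noteq> 0" "real_smooth r" "test_fun X r"
  shows "test_fun X (\<lambda>x. c * r x)"
  using assms by (simp add: test_fun_def smooth_real_smooth real_smooth_cmult)

section \<open>Integration by parts and weak gradients\<close>

lemma integrable_continuous_compact_support:
  fixes f :: "'a::euclidean_space \<Rightarrow> real"
  assumes "continuous_on UNIV f" "compact K" "\<And>x. x \<notin> K \<Longrightarrow> f x = 0"
  shows "integrable lborel f"
proof -
  have "f = (\<lambda>x. indicator K x *\<^sub>R f x)"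
    using assms(3) by (auto simp: fun_eq_iff indicator_def)
  moreover have "integrable lborel (\<lambda>x. indicator K x *\<^sub>R f x)"
    by (rule borel_integrable_compact[OF assms(2) continuous_on_subset[OF assms(1)]]) simp
  ultimately show ?thesis by simp
qed

lemma set_integral_eq_integral:
  fixes f :: "'a::euclidean_space \<Rightarrow> real"
  assumes "\<And>x. x \<notin> U \<Longrightarrow> f x = 0"
  shows "(LINT z:U|lborel. f z) = integral\<^sup>L lborel f"
proof -
  have "(\<lambda>x. indicator U x *\<^sub>R f x) = f"
    using assms by (auto simp: fun_eq_iff indicator_def)
  then show ?thesis by (simp add: set_lebesgue_integral_def)
qed

lemma integrable_frechet_derivative_compact_support:
  fixes w :: "'a::euclidean_space \<Rightarrow> real"
  assumes "continuous_on UNIV (\<lambda>z. frechet_derivative w (at z) i)"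
    and "compact K" "\<And>z. z \<notin> K \<Longrightarrow> w z = 0"
  shows "integrable lborel (\<lambda>z. frechet_derivative w (at z) i)"
  using integrable_continuous_compact_support[OF assms(1,2)]
    frechet_derivative_eq_0_outside_support[OF compact_imp_closed[OF assms(2)] _ assms(3)]
  by simp

lemma integral_deriv_eq_0_compact_support:
  fixes w w' :: "real \<Rightarrow> real"
  assumes deriv: "\<And>x. (w has_real_derivative w' x) (at x)" and cont: "continuous_on UNIV w'"
    and K: "compact K" "\<And>x. x \<notin> K \<Longrightarrow> w x = 0"
  shows "integrable lborel w' \<and> integral\<^sup>L lborel w' = 0"
proof -
  have w'_eq_0: "w' x = 0" if "x \<notin> K" for x
    using frechet_derivative_eq_0_outside_support[OF compact_imp_closed[OF K(1)] that K(2), where v=1]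
      frechet_derivative_real[OF deriv[of x], of 1] by simp
  obtain R where R: "\<And>x. x \<in> K \<Longrightarrow> \<bar>x\<bar> \<le> R"
    using compact_imp_bounded[OF K(1)] by (auto simp: bounded_iff)
  define A B where "A = - \<bar>R\<bar> - 1" and "B = \<bar>R\<bar> + 1"
  have K_sub: "K \<subseteq> {A<..<B}"
  proof
    fix x assume "x \<in> K"
    then show "x \<in> {A<..<B}" using R[of x] by (simp add: A_def B_def abs_le_iff)
  qed
  then have "A \<notin> K" "B \<notin> K" by auto
  with K_sub have A_B: "A \<le> B" "w A = 0" "w B = 0" "K \<subseteq> {A..B}"
    using K(2) by (auto simp: A_def B_def)
  have "integral\<^sup>L lborel w' = integral\<^sup>L lborel (\<lambda>x. indicator {A..B} x *\<^sub>R w' x)"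
    using A_B(4) w'_eq_0 by (intro Bochner_Integration.integral_cong) (auto simp: indicator_def subset_iff)
  also have "\<dots> = w B - w A"
    using deriv cont
    by (intro integral_FTC_atLeastAtMost[OF A_B(1)])
       (auto simp: has_real_derivative_iff_has_vector_derivative[symmetric]
         intro: has_field_derivative_at_within continuous_on_subset)
  finally show ?thesis
    using A_B integrable_continuous_compact_support[OF cont K(1) w'_eq_0] by simp
qed

lemma has_real_derivative_partial_fst:
  fixes w :: "real \<times> real \<Rightarrow> real"
  assumes "w differentiable (at (x, y))"
  shows "((\<lambda>x. w (x, y)) has_real_derivative frechet_derivative w (at (x, y)) (1, 0)) (at x)"
proof -
  let ?F = "frechet_derivative w (at (x, y))"
  have dw: "(w has_derivative ?F) (at (x, y))"
    using assms frechet_derivative_works by blast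
  have "((\<lambda>x. (x, y)) has_derivative (\<lambda>h. (h, 0))) (at x)"
    by (auto intro!: derivative_eq_intros)
  then have "((\<lambda>x. w (x, y)) has_derivative (\<lambda>h. ?F (h, 0))) (at x)"
    using diff_chain_at[of _ _ x w ?F] dw by (simp add: o_def)
  moreover have "(\<lambda>h. ?F (h, 0)) = (\<lambda>h. ?F (1, 0) * h)"
  proof
    fix h :: real
    have "?F (h, 0) = ?F (h *\<^sub>R (1, 0))" by simp
    also have "\<dots> = h *\<^sub>R ?F (1, 0)" by (rule linear_cmul[OF has_derivative_linear[OF dw]])
    finally show "?F (h, 0) = ?F (1, 0) * h" by simp
  qed
  ultimately show ?thesis by (simp add: has_field_derivative_def)
qed

lemma has_real_derivative_partial_snd:
  fixes w :: "real \<times> real \<Rightarrow> real"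
  assumes "w differentiable (at (x, y))"
  shows "((\<lambda>y. w (x, y)) has_real_derivative frechet_derivative w (at (x, y)) (0, 1)) (at y)"
proof -
  let ?F = "frechet_derivative w (at (x, y))"
  have dw: "(w has_derivative ?F) (at (x, y))"
    using assms frechet_derivative_works by blast
  have "((\<lambda>y. (x, y)) has_derivative (\<lambda>h. (0, h))) (at y)"
    by (auto intro!: derivative_eq_intros)
  then have "((\<lambda>y. w (x, y)) has_derivative (\<lambda>h. ?F (0, h))) (at y)"
    using diff_chain_at[of _ _ y w ?F] dw by (simp add: o_def)
  moreover have "(\<lambda>h. ?F (0, h)) = (\<lambda>h. ?F (0, 1) * h)"
  proof
    fix h :: real
    have "?F (0, h) = ?F (h *\<^sub>R (0, 1))" by simp
    also have "\<dots> = h *\<^sub>R ?F (0, 1)" by (rule linear_cmul[OF has_derivative_linear[OF dw]])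
    finally show "?F (0, h) = ?F (0, 1) * h" by simp
  qed
  ultimately show ?thesis by (simp add: has_field_derivative_def)
qed

lemma Basis_real_prod: "(Basis :: (real \<times> real) set) = {(1, 0), (0, 1)}"
  by (auto simp: Basis_prod_def)

lemma integral_partial_eq_0_compact_support:
  fixes w :: "real \<times> real \<Rightarrow> real" and i :: "real \<times> real"
  assumes diff: "\<And>z. w differentiable (at z)"
    and cont: "continuous_on UNIV (\<lambda>z. frechet_derivative w (at z) i)" and i: "i \<in> Basis"
    and K: "compact K" "\<And>z. z \<notin> K \<Longrightarrow> w z = 0"
  shows "integrable lborel (\<lambda>z. frechet_derivative w (at z) i) \<and>
    integral\<^sup>L lborel (\<lambda>z. frechet_derivative w (at z) i) = 0"
proof -
  define g where "g z = frechet_derivative w (at z) i" for z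
  have g_cont: "continuous_on UNIV g"
    using cont by (simp add: g_def[abs_def])
  have g_int: "integrable lborel g"
    using integrable_frechet_derivative_compact_support[OF cont K] by (simp add: g_def[abs_def])
  then have g_int2: "integrable (lborel \<Otimes>\<^sub>M lborel) g"
    by (simp add: lborel_prod)
  have cont_fst: "continuous_on UNIV (\<lambda>x. g (x, y))" for y
    by (rule continuous_on_compose2[OF g_cont]) (auto intro: continuous_intros)
  have cont_snd: "continuous_on UNIV (\<lambda>y. g (x, y))" for x
    by (rule continuous_on_compose2[OF g_cont]) (auto intro: continuous_intros)
  have "compact (fst ` K)" "compact (snd ` K)"
    using K(1) by (simp_all add: compact_continuous_image continuous_on_fst continuous_on_snd)
  note K_fst_snd = this K(2)
  have "integral\<^sup>L lborel g = 0"
  proof (cases "i = (1, 0)")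
    case True
    have "(\<integral>x. g (x, y) \<partial>lborel) = 0" for y
      using integral_deriv_eq_0_compact_support[of "\<lambda>x. w (x, y)" "\<lambda>x. g (x, y)" "fst ` K"]
        has_real_derivative_partial_fst[OF diff] cont_fst K_fst_snd
      by (force simp: g_def True)
    then have "(\<integral>y. (\<integral>x. g (x, y) \<partial>lborel) \<partial>lborel) = 0"
      by simp
    then show ?thesis
      using lborel_pair.integral_snd[of "\<lambda>x y. g (x, y)"] g_int2 by (simp add: lborel_prod)
  next
    case False
    with i have snd: "i = (0, 1)" by (auto simp: Basis_real_prod)
    have "(\<integral>y. g (x, y) \<partial>lborel) = 0" for x
      using integral_deriv_eq_0_compact_support[of "\<lambda>y. w (x, y)" "\<lambda>y. g (x, y)" "snd ` K"]
        has_real_derivative_partial_snd[OF diff] cont_snd K_fst_snd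
      by (force simp: g_def snd)
    then have "(\<integral>x. (\<integral>y. g (x, y) \<partial>lborel) \<partial>lborel) = 0"
      by simp
    then show ?thesis
      using lborel_pair.integral_fst'[of g] g_int2 by (simp add: lborel_prod)
  qed
  with g_int show ?thesis by (simp add: g_def[abs_def])
qed

text \<open>Integration by parts is reduced to this property of the coordinate directions, which is
  established only for \<open>\<real>\<close> and \<open>\<real>\<^sup>2\<close>.\<close>
definition integral_partial_vanishes :: "'a::euclidean_space \<Rightarrow> bool" where
  "integral_partial_vanishes i \<longleftrightarrow> (\<forall>w::'a \<Rightarrow> real. (\<forall>z. w differentiable (at z)) \<longrightarrow>
      continuous_on UNIV (\<lambda>z. frechet_derivative w (at z) i) \<longrightarrow>
      (\<exists>K. compact K \<and> (\<forall>z. z \<notin> K \<longrightarrow> w z = 0)) \<longrightarrow>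
      integral\<^sup>L lborel (\<lambda>z. frechet_derivative w (at z) i) = 0)"

lemma integral_partial_vanishes_real: "integral_partial_vanishes (1::real)"
  unfolding integral_partial_vanishes_def
proof (intro allI impI, elim exE conjE)
  fix w :: "real \<Rightarrow> real" and K
  assume diff: "\<forall>z. w differentiable (at z)"
    and "continuous_on UNIV (\<lambda>z. frechet_derivative w (at z) 1)"
    and "compact K" "\<forall>z. z \<notin> K \<longrightarrow> w z = 0"
  moreover have "(w has_real_derivative frechet_derivative w (at x) 1) (at x)" for x
  proof (rule has_derivative_imp_has_field_derivative)
    show "(w has_derivative frechet_derivative w (at x)) (at x)"
      using diff frechet_derivative_works by blast
    show "h * frechet_derivative w (at x) 1 = frechet_derivative w (at x) h" for h
      using linear_cmul[OF has_derivative_linear[OF \<open>(w has_derivative _) _\<close>], of h 1] by simp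
  qed
  ultimately show "integral\<^sup>L lborel (\<lambda>z. frechet_derivative w (at z) 1) = 0"
    using integral_deriv_eq_0_compact_support[of w "\<lambda>z. frechet_derivative w (at z) 1" K] by auto
qed

lemma integral_partial_vanishes_prod:
  "i \<in> Basis \<Longrightarrow> integral_partial_vanishes (i::real \<times> real)"
  unfolding integral_partial_vanishes_def
  using integral_partial_eq_0_compact_support by blast

lemma integral_by_parts_compact_support:
  fixes u \<phi> :: "'a::euclidean_space \<Rightarrow> real"
  assumes u: "smooth u" and \<phi>: "smooth \<phi>" "compact K" "\<And>z. z \<notin> K \<Longrightarrow> \<phi> z = 0"
    and i: "integral_partial_vanishes i"
  shows "integral\<^sup>L lborel (\<lambda>z. u z * frechet_derivative \<phi> (at z) i) =
    - integral\<^sup>L lborel (\<lambda>z. frechet_derivative u (at z) i * \<phi> z)"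
proof -
  define a b where "a z = u z * frechet_derivative \<phi> (at z) i"
    and "b z = frechet_derivative u (at z) i * \<phi> z" for z
  have "((\<lambda>z. u z * \<phi> z) has_derivative
      (\<lambda>h. u z * frechet_derivative \<phi> (at z) h + frechet_derivative u (at z) h * \<phi> z)) (at z)" for z
    by (rule has_derivative_mult[OF frechet_derivative_works[THEN iffD1, OF smooth_differentiable[OF u]]
          frechet_derivative_works[THEN iffD1, OF smooth_differentiable[OF \<phi>(1)]]])
  note uv_deriv = this
  have deriv: "frechet_derivative (\<lambda>z. u z * \<phi> z) (at z) i = a z + b z" for z
    using fun_cong[OF frechet_derivative_at[OF uv_deriv[of z]], of i] by (simp add: a_def b_def)
  have cont: "continuous_on UNIV a" "continuous_on UNIV b"
    unfolding a_def[abs_def] b_def[abs_def]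
    by (rule continuous_on_mult[OF smooth_continuous_on[OF u]
          smooth_continuous_on_frechet_derivative[OF \<phi>(1)]],
        rule continuous_on_mult[OF smooth_continuous_on_frechet_derivative[OF u]
          smooth_continuous_on[OF \<phi>(1)]])
  have outside: "a z = 0" "b z = 0" if "z \<notin> K" for z
    using \<phi>(3)[OF that] frechet_derivative_eq_0_outside_support[OF compact_imp_closed[OF \<phi>(2)] that \<phi>(3)]
    by (simp_all add: a_def b_def)
  have int: "integrable lborel a" "integrable lborel b"
    using integrable_continuous_compact_support[OF cont(1) \<phi>(2) outside(1)]
      integrable_continuous_compact_support[OF cont(2) \<phi>(2) outside(2)] by simp_all
  have "integral\<^sup>L lborel (\<lambda>z. frechet_derivative (\<lambda>z. u z * \<phi> z) (at z) i) = 0"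
    using i unfolding integral_partial_vanishes_def
  proof (elim allE impE)
    show "\<forall>z. (\<lambda>z. u z * \<phi> z) differentiable (at z)"
      using uv_deriv differentiable_def by blast
    show "continuous_on UNIV (\<lambda>z. frechet_derivative (\<lambda>z. u z * \<phi> z) (at z) i)"
      unfolding deriv by (rule continuous_on_add[OF cont])
    show "\<exists>K. compact K \<and> (\<forall>z. z \<notin> K \<longrightarrow> u z * \<phi> z = 0)"
      using \<phi>(2,3) by auto
  qed
  then have "integral\<^sup>L lborel a + integral\<^sup>L lborel b = 0"
    by (simp add: deriv Bochner_Integration.integral_add[OF int])
  then show ?thesis by (simp add: a_def[abs_def] b_def[abs_def] eq_neg_iff_add_eq_0)
qed

lemma set_integral_by_parts_test_fun:
  fixes u \<phi> :: "'a::euclidean_space \<Rightarrow> real"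
  assumes u: "smooth u" and \<phi>: "test_fun U \<phi>" and i: "integral_partial_vanishes i"
  shows "(LINT z:U|lborel. u z * frechet_derivative \<phi> (at z) i) =
    - (LINT z:U|lborel. frechet_derivative u (at z) i * \<phi> z)"
proof -
  let ?K = "closure {x. \<phi> x \<noteq> 0}"
  have K: "smooth \<phi>" "compact ?K" "?K \<subseteq> U"
    using \<phi> by (simp_all add: test_fun_def)
  have outside: "\<phi> z = 0" "frechet_derivative \<phi> (at z) i = 0" if "z \<notin> U" for z
  proof -
    have "z \<notin> ?K" using that K(3) by blast
    then show "\<phi> z = 0" "frechet_derivative \<phi> (at z) i = 0"
      by (rule not_in_closure_support,
          rule frechet_derivative_eq_0_outside_support[OF closed_closure _ not_in_closure_support])
  qed
  have "(LINT z:U|lborel. u z * frechet_derivative \<phi> (at z) i) =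
      integral\<^sup>L lborel (\<lambda>z. u z * frechet_derivative \<phi> (at z) i)"
    by (rule set_integral_eq_integral) (simp add: outside)
  also have "\<dots> = - integral\<^sup>L lborel (\<lambda>z. frechet_derivative u (at z) i * \<phi> z)"
    using integral_by_parts_compact_support[OF u K(1,2) not_in_closure_support[of _ \<phi>] i] .
  also have "integral\<^sup>L lborel (\<lambda>z. frechet_derivative u (at z) i * \<phi> z) =
      (LINT z:U|lborel. frechet_derivative u (at z) i * \<phi> z)"
    by (rule set_integral_eq_integral[symmetric]) (simp add: outside)
  finally show ?thesis .
qed

lemma L2_continuous_on:
  fixes u :: "'a::euclidean_space \<Rightarrow> real"
  assumes u: "continuous_on UNIV u" and U: "bounded U" "U \<in> sets lborel"
  shows "L2 U u"
proof -
  have "u \<in> borel_measurable lborel"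
    using borel_measurable_continuous_onI[OF u] by simp
  then have "set_borel_measurable lborel U u"
    unfolding set_borel_measurable_def using U(2) by measurable
  moreover have "set_integrable lborel (closure U) (\<lambda>z. (u z)\<^sup>2)"
    unfolding set_integrable_def
  proof (rule borel_integrable_compact)
    show "compact (closure U)" using U(1) by (simp add: compact_closure)
    show "continuous_on (closure U) (\<lambda>z. (u z)\<^sup>2)"
      by (intro continuous_on_power continuous_on_subset[OF u]) simp
  qed
  then have "set_integrable lborel U (\<lambda>z. (u z)\<^sup>2)"
    by (rule set_integrable_subset) (use U(2) closure_subset in auto)
  ultimately show ?thesis by (simp add: L2_def)
qed

lemma grad_inner_Basis: "i \<in> Basis \<Longrightarrow> grad u z \<bullet> i = frechet_derivative u (at z) i"
  unfolding grad_def by (rule inner_sum_left_Basis)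

lemma weak_grad_smooth:
  fixes u :: "'a::euclidean_space \<Rightarrow> real"
  assumes u: "smooth u" and U: "open U" "bounded U"
    and partials: "\<And>i::'a. i \<in> Basis \<Longrightarrow> integral_partial_vanishes i"
  shows "weak_grad U u (grad u)"
proof -
  have U_sets: "U \<in> sets lborel" using U(1) by simp
  have "L2 U u"
    by (rule L2_continuous_on[OF smooth_continuous_on[OF u] U(2) U_sets])
  moreover have "L2 U (\<lambda>z. grad u z \<bullet> i)" if "i \<in> Basis" for i
    using L2_continuous_on[OF smooth_continuous_on_frechet_derivative[OF u] U(2) U_sets] that
    by (simp add: grad_inner_Basis)
  moreover have "(LINT z:U|lborel. u z * frechet_derivative \<phi> (at z) i) =
      - (LINT z:U|lborel. (grad u z \<bullet> i) * \<phi> z)"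
    if "test_fun U \<phi>" "i \<in> Basis" for \<phi> i
    using set_integral_by_parts_test_fun[OF u that(1) partials[OF that(2)]] that(2)
    by (simp add: grad_inner_Basis)
  ultimately show ?thesis by (simp add: weak_grad_def)
qed

lemma H10_test_fun:
  fixes u :: "'a::euclidean_space \<Rightarrow> real"
  assumes u: "test_fun U u" and U: "open U" "bounded U"
    and partials: "\<And>i::'a. i \<in> Basis \<Longrightarrow> integral_partial_vanishes i"
  shows "H10 U u"
  unfolding H10_def
proof (intro exI conjI)
  show "weak_grad U u (grad u)"
    using u weak_grad_smooth[OF _ U partials] by (simp add: test_fun_def)
  show "\<forall>n. test_fun U ((\<lambda>n. u) n)" using u by simp
qed simp_all

section \<open>Products of test functions determine integrable functions\<close>

lemma L2_imp_set_integrable: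
  fixes u :: "'a::euclidean_space \<Rightarrow> real"
  assumes U: "bounded U" "U \<in> sets lborel" and u: "L2 U u"
  shows "set_integrable lborel U u"
proof -
  have "integrable lborel (\<lambda>z. indicator U z + indicator U z *\<^sub>R (u z)\<^sup>2)"
    using u integrable_real_indicator[OF U(2) emeasure_bounded_finite[OF U(1)]]
    by (simp add: L2_def set_integrable_def)
  moreover have "(\<lambda>z. indicator U z *\<^sub>R u z) \<in> borel_measurable lborel"
    using u by (simp add: L2_def set_borel_measurable_def)
  moreover have "\<bar>u z\<bar> \<le> 1 + (u z)\<^sup>2" for z
    using sum_power2_ge_zero[of "\<bar>u z\<bar> - 1" 0] by (simp add: power2_diff)
  then have "norm (indicator U z *\<^sub>R u z) \<le> norm (indicator U z + indicator U z *\<^sub>R (u z)\<^sup>2)" for z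
    by (simp add: indicator_def)
  ultimately show ?thesis
    unfolding set_integrable_def by (blast intro: Bochner_Integration.integrable_bound)
qed

lemma set_integrable_mult_bounded:
  fixes h \<phi> :: "'a::euclidean_space \<Rightarrow> real"
  assumes h: "set_integrable lborel U h" and \<phi>: "\<phi> \<in> borel_measurable lborel" "\<And>z. \<bar>\<phi> z\<bar> \<le> M"
  shows "set_integrable lborel U (\<lambda>z. h z * \<phi> z)"
proof -
  have "integrable lborel (\<lambda>z. M * (indicator U z *\<^sub>R h z))"
    using h by (simp add: set_integrable_def)
  moreover have "(\<lambda>z. (indicator U z *\<^sub>R h z) * \<phi> z) \<in> borel_measurable lborel"
    using borel_measurable_integrable[OF h[unfolded set_integrable_def]] \<phi>(1) by measurable
  moreover have "norm ((indicator U z *\<^sub>R h z) * \<phi> z) \<le> norm (M * (indicator U z *\<^sub>R h z))" for z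
    using mult_left_mono[OF \<phi>(2), of "\<bar>indicator U z *\<^sub>R h z\<bar>" z] \<phi>(2)[of z]
    by (simp add: abs_mult mult.commute)
  ultimately have "integrable lborel (\<lambda>z. (indicator U z *\<^sub>R h z) * \<phi> z)"
    by (blast intro: Bochner_Integration.integrable_bound)
  then show ?thesis by (simp add: set_integrable_def mult.assoc)
qed

definition orthogonal_to_tensor_tests ::
    "real set \<Rightarrow> real set \<Rightarrow> (real \<times> real \<Rightarrow> real) \<Rightarrow> bool" where
  "orthogonal_to_tensor_tests X Y h \<longleftrightarrow> (\<forall>r s. real_smooth r \<longrightarrow> real_smooth s \<longrightarrow>
     test_fun X r \<longrightarrow> test_fun Y s \<longrightarrow> (LINT z:X \<times> Y|lborel. h z * tensor r s z) = 0)"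

lemma AE_eq_0_if_box_integrals_eq_0:
  fixes f :: "'a::euclidean_space \<Rightarrow> real"
  assumes fi: "integrable lborel f" and bx: "\<And>a b. (LINT x:box a b|lborel. f x) = 0"
    and tot: "integral\<^sup>L lborel f = 0"
  shows "AE x in lborel. f x = 0"
proof (rule density_unique_real[OF fi integrable_zero])
  fix A :: "'a set" assume A: "A \<in> sets lborel"
  let ?G = "range (\<lambda>(a, b). box a b :: 'a set)"
  have st: "Int_stable ?G" by (auto simp: Int_stable_def box_Int_box)
  have sb: "?G \<subseteq> Pow UNIV" by auto
  have As: "A \<in> sigma_sets UNIV ?G" using A unfolding sets_lborel borel_eq_box by simp
  have "(LINT x:A|lborel. f x) = 0"
    using st sb As
  proof (induction rule: sigma_sets_induct_disjoint)
    case (basic A)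
    then show ?case using bx by auto
  next
    case empty
    then show ?case by (simp add: set_lebesgue_integral_def)
  next
    case (compl A)
    then have [measurable]: "A \<in> sets borel" by (simp add: borel_eq_box)
    have "(LINT x:(UNIV - A)|lborel. f x) = integral\<^sup>L lborel (\<lambda>x. f x - indicator A x *\<^sub>R f x)"
      unfolding set_lebesgue_integral_def
      by (rule Bochner_Integration.integral_cong) (auto simp: indicator_def)
    also have "\<dots> = integral\<^sup>L lborel f - (LINT x:A|lborel. f x)"
      unfolding set_lebesgue_integral_def
      by (rule Bochner_Integration.integral_diff[OF fi integrable_mult_indicator]) (use fi in simp_all)
    finally show ?case using compl tot by simp
  next
    case (union F)
    then have [measurable]: "\<And>i. F i \<in> sets borel" by (simp add: borel_eq_box subset_eq)
    have "(LINT x:(\<Union>i. F i)|lborel. f x) = (\<Sum>i. (LINT x:(F i)|lborel. f x))"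
    proof (rule lebesgue_integral_countable_add)
      show "\<And>i. F i \<in> sets lborel" by simp
      show "\<And>i j. i \<noteq> j \<Longrightarrow> F i \<inter> F j = {}" using union(1) by (auto simp: disjoint_family_on_def)
      show "set_integrable lborel (\<Union>i. F i) f"
        unfolding set_integrable_def by (rule integrable_mult_indicator) (use fi in simp_all)
    qed
    then show ?case using union by simp
  qed
  then show "(LINT x:A|lborel. f x) = (LINT x:A|lborel. 0)" by (simp add: set_lebesgue_integral_def)
qed

lemma AE_eq_0_on_box_if_box_integrals_eq_0:
  fixes h :: "'a::euclidean_space \<Rightarrow> real"
  assumes hi: "set_integrable lborel U h" and sub: "box a0 b0 \<subseteq> U"
    and bx: "\<And>a b. box a b \<subseteq> U \<Longrightarrow> (LINT z:U|lborel. h z * indicator (box a b) z) = 0"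
  shows "AE z in lborel. z \<in> box a0 b0 \<longrightarrow> h z = 0"
proof -
  define f where "f z = indicator (box a0 b0) z * h z" for z
  have f_eq: "f = (\<lambda>z. indicator (box a0 b0) z *\<^sub>R (indicator U z *\<^sub>R h z))"
    using sub by (auto simp: fun_eq_iff f_def indicator_def)
  have fi: "integrable lborel f"
    unfolding f_eq by (rule integrable_mult_indicator) (use hi in \<open>simp_all add: set_integrable_def\<close>)
  have "AE z in lborel. f z = 0"
  proof (rule AE_eq_0_if_box_integrals_eq_0[OF fi])
    fix a b :: 'a
    define c :: 'a where "c = (\<Sum>i\<in>Basis. max (a \<bullet> i) (a0 \<bullet> i) *\<^sub>R i)"
    define d :: 'a where "d = (\<Sum>i\<in>Basis. min (b \<bullet> i) (b0 \<bullet> i) *\<^sub>R i)"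
    have cd: "box a b \<inter> box a0 b0 = box c d"
      unfolding c_def d_def by (rule box_Int_box)
    then have "(LINT z:U|lborel. h z * indicator (box c d) z) = 0"
      using sub by (intro bx) blast
    moreover have "(LINT x:box a b|lborel. f x) = (LINT z:U|lborel. h z * indicator (box c d) z)"
      unfolding set_lebesgue_integral_def
    proof (rule Bochner_Integration.integral_cong[OF refl])
      fix z
      have "z \<in> box c d \<longleftrightarrow> z \<in> box a b \<and> z \<in> box a0 b0" using cd by blast
      then show "indicator (box a b) z *\<^sub>R f z = indicator U z *\<^sub>R (h z * indicator (box c d) z)"
        using sub by (auto simp: f_def indicator_def)
    qed
    ultimately show "(LINT x:box a b|lborel. f x) = 0" by simp
  next
    have "integral\<^sup>L lborel f = (LINT z:U|lborel. h z * indicator (box a0 b0) z)"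
      unfolding set_lebesgue_integral_def
      by (rule Bochner_Integration.integral_cong) (use sub in \<open>auto simp: f_def indicator_def\<close>)
    also have "\<dots> = 0" using sub by (rule bx)
    finally show "integral\<^sup>L lborel f = 0" .
  qed
  then show ?thesis by eventually_elim (auto simp: f_def indicator_def)
qed

lemma AE_eq_0_on_open_if_box_integrals_eq_0:
  fixes h :: "'a::euclidean_space \<Rightarrow> real"
  assumes U: "open U" and hi: "set_integrable lborel U h"
    and bx: "\<And>a b. box a b \<subseteq> U \<Longrightarrow> (LINT z:U|lborel. h z * indicator (box a b) z) = 0"
  shows "AE z in lborel. z \<in> U \<longrightarrow> h z = 0"
proof -
  obtain D where D: "countable D" "D \<subseteq> Pow U" "\<And>X. X \<in> D \<Longrightarrow> \<exists>a b. X = box a b" "\<Union>D = U"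
    using open_countable_Union_open_box[OF U] by metis
  have "AE z in lborel. z \<in> X \<longrightarrow> h z = 0" if X: "X \<in> D" for X
  proof -
    obtain a b where "X = box a b" using D(3)[OF X] by blast
    moreover have "X \<subseteq> U" using D(2) X by blast
    ultimately show ?thesis
      using AE_eq_0_on_box_if_box_integrals_eq_0[OF hi _ bx] by blast
  qed
  then have "AE z in lborel. \<forall>X\<in>D. z \<in> X \<longrightarrow> h z = 0"
    by (subst AE_ball_countable[OF D(1)]) blast
  then show ?thesis
  proof eventually_elim
    case (elim z)
    show ?case
    proof
      assume "z \<in> U"
      then obtain X where "X \<in> D" "z \<in> X" using D(4) by blast
      then show "h z = 0" using elim by blast
    qed
  qed
qed

lemma set_integral_mult_tendsto_bounded:
  fixes h :: "'a::euclidean_space \<Rightarrow> real"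
  assumes hi: "set_integrable lborel U h" and gm: "\<And>n. g n \<in> borel_measurable lborel"
    and Gm: "G \<in> borel_measurable lborel"
    and gb: "\<And>n z. \<bar>g n z\<bar> \<le> 1" and gl: "\<And>z. (\<lambda>n. g n z) \<longlonglongrightarrow> G z"
  shows "(\<lambda>n. LINT z:U|lborel. h z * g n z) \<longlonglongrightarrow> (LINT z:U|lborel. h z * G z)"
proof -
  define H where "H z = indicator U z *\<^sub>R h z" for z
  have Hi: "integrable lborel H" using hi by (simp add: set_integrable_def H_def[abs_def])
  have Hm: "H \<in> borel_measurable lborel" using Hi by (rule borel_measurable_integrable)
  have e1: "(\<lambda>z. indicator U z *\<^sub>R (h z * g n z)) = (\<lambda>z. H z * g n z)" for n
    by (auto simp: H_def)
  have e2: "(\<lambda>z. indicator U z *\<^sub>R (h z * G z)) = (\<lambda>z. H z * G z)"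
    by (auto simp: H_def)
  have "(\<lambda>n. integral\<^sup>L lborel (\<lambda>z. H z * g n z)) \<longlonglongrightarrow> integral\<^sup>L lborel (\<lambda>z. H z * G z)"
  proof (rule integral_dominated_convergence[where w="\<lambda>z. norm (H z)"])
    show "(\<lambda>z. H z * G z) \<in> borel_measurable lborel" using Hm Gm by (rule borel_measurable_times)
    show "(\<lambda>z. H z * g n z) \<in> borel_measurable lborel" for n using Hm gm by (rule borel_measurable_times)
    show "integrable lborel (\<lambda>z. norm (H z))" using Hi by (rule integrable_norm)
    show "AE z in lborel. (\<lambda>n. H z * g n z) \<longlonglongrightarrow> H z * G z"
      by (intro AE_I2 tendsto_mult_left gl)
    show "AE z in lborel. norm (H z * g n z) \<le> norm (H z)" for n
    proof (intro AE_I2)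
      fix z
      have "\<bar>H z\<bar> * \<bar>g n z\<bar> \<le> \<bar>H z\<bar> * 1" by (rule mult_left_mono[OF gb]) simp
      then show "norm (H z * g n z) \<le> norm (H z)" by (simp add: abs_mult)
    qed
  qed
  then show ?thesis unfolding set_lebesgue_integral_def e1 e2 .
qed

lemma mem_box_Pair:
  fixes x y a1 a2 b1 b2 :: real
  shows "(x, y) \<in> box (a1, a2) (b1, b2) \<longleftrightarrow> a1 < x \<and> x < b1 \<and> a2 < y \<and> y < b2"
  by (auto simp: mem_box Basis_real_prod)

lemma indicator_box_Pair:
  fixes x y a1 a2 b1 b2 :: real
  shows "indicator (box (a1, a2) (b1, b2)) (x, y) = indicator {a1<..<b1} x * (indicator {a2<..<b2} y :: real)"
  by (auto simp: mem_box_Pair indicator_def)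

lemma set_integral_indicator_box_eq_0_compact:
  fixes h :: "real \<times> real \<Rightarrow> real"
  assumes hi: "set_integrable lborel (X \<times> Y) h"
    and orth: "orthogonal_to_tensor_tests X Y h"
    and sub: "cbox (a1, a2) (b1, b2) \<subseteq> X \<times> Y"
  shows "(LINT z:X \<times> Y|lborel. h z * indicator (box (a1, a2) (b1, b2)) z) = 0"
proof (cases "a1 < b1 \<and> a2 < b2")
  case False
  have "indicator (box (a1, a2) (b1, b2)) z = (0::real)" for z
    using False by (cases z) (auto simp: mem_box_Pair indicator_def)
  then show ?thesis by (simp add: set_lebesgue_integral_def)
next
  case True
  have "{a1..b1} \<times> {a2..b2} \<subseteq> X \<times> Y" using sub by (simp add: cbox_Pair_eq)
  then have XY: "{a1..b1} \<subseteq> X" "{a2..b2} \<subseteq> Y" using True by (auto simp: times_subset_iff)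
  define g where "g n = tensor (interval_approx a1 b1 n) (interval_approx a2 b2 n)" for n
  have "(\<lambda>n. LINT z:X \<times> Y|lborel. h z * g n z) \<longlonglongrightarrow>
      (LINT z:X \<times> Y|lborel. h z * indicator (box (a1, a2) (b1, b2)) z)"
  proof (rule set_integral_mult_tendsto_bounded[OF hi])
    show "g n \<in> borel_measurable lborel" for n
      using borel_measurable_continuous_onI[OF smooth_continuous_on[OF
          smooth_tensor[OF real_smooth_interval_approx real_smooth_interval_approx]]]
      by (simp add: g_def)
    show "indicator (box (a1, a2) (b1, b2)) \<in> borel_measurable lborel" by simp
    show "\<bar>g n z\<bar> \<le> 1" for n z
    proof -
      have "\<bar>interval_approx a1 b1 n (fst z)\<bar> * \<bar>interval_approx a2 b2 n (snd z)\<bar> \<le> 1"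
        by (rule mult_le_one) (auto simp: abs_interval_approx_le)
      then show ?thesis by (cases z) (simp add: g_def tensor_def abs_mult)
    qed
    show "(\<lambda>n. g n z) \<longlonglongrightarrow> indicator (box (a1, a2) (b1, b2)) z" for z
    proof -
      obtain x y where z: "z = (x, y)" by force
      have "(\<lambda>n. interval_approx a1 b1 n x * interval_approx a2 b2 n y) \<longlonglongrightarrow>
          indicator {a1<..<b1} x * indicator {a2<..<b2} y"
        by (intro tendsto_mult interval_approx_tendsto)
      then show ?thesis by (simp add: z g_def tensor_def indicator_box_Pair)
    qed
  qed
  moreover have "(LINT z:X \<times> Y|lborel. h z * g n z) = 0" for n
    using orth real_smooth_interval_approx test_fun_interval_approx[OF XY(1)]
      test_fun_interval_approx[OF XY(2)]
    unfolding g_def orthogonal_to_tensor_tests_def by blast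
  ultimately have "(\<lambda>n. 0::real) \<longlonglongrightarrow>
      (LINT z:X \<times> Y|lborel. h z * indicator (box (a1, a2) (b1, b2)) z)"
    by simp
  from LIMSEQ_unique[OF this tendsto_const[of 0]] show ?thesis by simp
qed

lemma tendsto_indicator_shrinking_box:
  fixes a1 a2 b1 b2 :: real
  defines "e n \<equiv> inverse (real (Suc n))"
  shows "(\<lambda>n. indicator (box (a1 + e n, a2 + e n) (b1 - e n, b2 - e n)) z :: real)
    \<longlonglongrightarrow> indicator (box (a1, a2) (b1, b2)) z"
proof -
  obtain x y where z: "z = (x, y)" by force
  show ?thesis
  proof (cases "a1 < x \<and> x < b1 \<and> a2 < y \<and> y < b2")
    case True
    define \<delta> where "\<delta> = min (min (x - a1) (b1 - x)) (min (y - a2) (b2 - y))"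
    have "0 < \<delta>" using True by (simp add: \<delta>_def)
    then obtain N where N: "0 < N" "inverse (real N) < \<delta>"
      using ex_inverse_of_nat_less by blast
    have "\<forall>n\<ge>N. indicator (box (a1 + e n, a2 + e n) (b1 - e n, b2 - e n)) z = (1::real)"
    proof (intro allI impI)
      fix n assume "n \<ge> N"
      then have "e n \<le> inverse (real N)"
        unfolding e_def using N(1) by (intro le_imp_inverse_le) auto
      then have "e n < \<delta>" using N(2) by linarith
      then show "indicator (box (a1 + e n, a2 + e n) (b1 - e n, b2 - e n)) z = (1::real)"
        by (auto simp: z mem_box_Pair \<delta>_def indicator_def)
    qed
    then have "\<forall>\<^sub>F n in sequentially. indicator (box (a1 + e n, a2 + e n) (b1 - e n, b2 - e n)) z = (1::real)"
      using eventually_sequentially by blast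
    then show ?thesis
      using True by (simp add: z mem_box_Pair tendsto_eventually)
  next
    case False
    have "indicator (box (a1 + e n, a2 + e n) (b1 - e n, b2 - e n)) z = (0::real)" for n
    proof -
      have "0 < e n" by (simp add: e_def)
      then show ?thesis using False by (auto simp: z mem_box_Pair indicator_def)
    qed
    moreover have "z \<notin> box (a1, a2) (b1, b2)"
      using False by (simp add: z mem_box_Pair)
    ultimately show ?thesis by simp
  qed
qed

lemma set_integral_indicator_box_eq_0:
  fixes h :: "real \<times> real \<Rightarrow> real"
  assumes hi: "set_integrable lborel (X \<times> Y) h"
    and orth: "orthogonal_to_tensor_tests X Y h"
    and sub: "box (a1, a2) (b1, b2) \<subseteq> X \<times> Y"
  shows "(LINT z:X \<times> Y|lborel. h z * indicator (box (a1, a2) (b1, b2)) z) = 0"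
proof -
  define e where "e n = inverse (real (Suc n))" for n
  define g :: "nat \<Rightarrow> real \<times> real \<Rightarrow> real"
    where "g n = indicator (box (a1 + e n, a2 + e n) (b1 - e n, b2 - e n))" for n
  have "(\<lambda>n. LINT z:X \<times> Y|lborel. h z * g n z) \<longlonglongrightarrow>
      (LINT z:X \<times> Y|lborel. h z * indicator (box (a1, a2) (b1, b2)) z)"
  proof (rule set_integral_mult_tendsto_bounded[OF hi])
    show "(\<lambda>n. g n z) \<longlonglongrightarrow> indicator (box (a1, a2) (b1, b2)) z" for z
      unfolding g_def e_def by (rule tendsto_indicator_shrinking_box)
  qed (simp_all add: g_def indicator_def)
  moreover have "(LINT z:X \<times> Y|lborel. h z * g n z) = 0" for n
    unfolding g_def
  proof (rule set_integral_indicator_box_eq_0_compact[OF hi orth])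
    show "cbox (a1 + e n, a2 + e n) (b1 - e n, b2 - e n) \<subseteq> X \<times> Y"
    proof
      fix z assume "z \<in> cbox (a1 + e n, a2 + e n) (b1 - e n, b2 - e n)"
      moreover have "0 < e n" by (simp add: e_def)
      ultimately have "z \<in> box (a1, a2) (b1, b2)"
        by (cases z) (auto simp: mem_box_Pair cbox_Pair_eq)
      then show "z \<in> X \<times> Y" using sub by blast
    qed
  qed
  ultimately have "(\<lambda>n. 0::real) \<longlonglongrightarrow>
      (LINT z:X \<times> Y|lborel. h z * indicator (box (a1, a2) (b1, b2)) z)"
    by simp
  from LIMSEQ_unique[OF this tendsto_const[of 0]] show ?thesis by simp
qed

lemma AE_eq_0_if_orthogonal_to_tensor_tests:
  fixes h :: "real \<times> real \<Rightarrow> real"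
  assumes XY: "open X" "open Y" and hi: "set_integrable lborel (X \<times> Y) h"
    and orth: "orthogonal_to_tensor_tests X Y h"
  shows "AE z in lborel. z \<in> X \<times> Y \<longrightarrow> h z = 0"
proof (rule AE_eq_0_on_open_if_box_integrals_eq_0[OF open_Times[OF XY] hi])
  fix a b :: "real \<times> real" assume "box a b \<subseteq> X \<times> Y"
  then show "(LINT z:X \<times> Y|lborel. h z * indicator (box a b) z) = 0"
    using set_integral_indicator_box_eq_0[OF hi orth, of "fst a" "snd a" "fst b" "snd b"] by simp
qed

section \<open>Uniqueness of weak gradients and the energy\<close>

lemma set_integral_weak_grad_diff_eq_0:
  fixes u :: "'a::euclidean_space \<Rightarrow> real"
  assumes U: "bounded U" "U \<in> sets lborel"
    and g1: "weak_grad U u g1" and g2: "weak_grad U u g2"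
    and \<phi>: "test_fun U \<phi>" and i: "i \<in> Basis"
  shows "(LINT z:U|lborel. (g1 z \<bullet> i - g2 z \<bullet> i) * \<phi> z) = 0"
proof -
  obtain M where M: "\<And>z. \<bar>\<phi> z\<bar> \<le> M"
    using test_fun_bounded[OF \<phi>] by blast
  have "smooth \<phi>" using \<phi> by (simp add: test_fun_def)
  then have meas: "\<phi> \<in> borel_measurable lborel"
    using borel_measurable_continuous_onI[OF smooth_continuous_on] by simp
  have int: "set_integrable lborel U (\<lambda>z. (g z \<bullet> i) * \<phi> z)" if "weak_grad U u g" for g
  proof (rule set_integrable_mult_bounded[OF L2_imp_set_integrable[OF U] meas M])
    show "L2 U (\<lambda>z. g z \<bullet> i)" using that i by (simp add: weak_grad_def)
  qed
  have "(LINT z:U|lborel. (g1 z \<bullet> i - g2 z \<bullet> i) * \<phi> z) =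
      (LINT z:U|lborel. (g1 z \<bullet> i) * \<phi> z) - (LINT z:U|lborel. (g2 z \<bullet> i) * \<phi> z)"
    unfolding left_diff_distrib by (rule set_integral_diff(2)[OF int[OF g1] int[OF g2]])
  also have "\<dots> = 0"
    using g1 g2 \<phi> i by (simp add: weak_grad_def)
  finally show ?thesis .
qed

lemma weak_grad_unique_AE:
  fixes u :: "real \<times> real \<Rightarrow> real"
  assumes XY: "open X" "open Y" "bounded X" "bounded Y"
    and g1: "weak_grad (X \<times> Y) u g1" and g2: "weak_grad (X \<times> Y) u g2"
  shows "AE z in lborel. z \<in> X \<times> Y \<longrightarrow> g1 z = g2 z"
proof -
  have U: "bounded (X \<times> Y)" "X \<times> Y \<in> sets lborel"
    using XY by (simp_all add: bounded_Times open_Times)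
  have components: "AE z in lborel. z \<in> X \<times> Y \<longrightarrow> g1 z \<bullet> i - g2 z \<bullet> i = 0"
    if i: "i \<in> Basis" for i
  proof (rule AE_eq_0_if_orthogonal_to_tensor_tests[OF XY(1,2)])
    show "set_integrable lborel (X \<times> Y) (\<lambda>z. g1 z \<bullet> i - g2 z \<bullet> i)"
      using g1 g2 i L2_imp_set_integrable[OF U]
      by (intro set_integral_diff(1)) (simp_all add: weak_grad_def)
    show "orthogonal_to_tensor_tests X Y (\<lambda>z. g1 z \<bullet> i - g2 z \<bullet> i)"
      unfolding orthogonal_to_tensor_tests_def
      using set_integral_weak_grad_diff_eq_0[OF U g1 g2 _ i] test_fun_tensor by blast
  qed
  have "AE z in lborel. z \<in> X \<times> Y \<longrightarrow> g1 z \<bullet> (1, 0) - g2 z \<bullet> (1, 0) = 0"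
    "AE z in lborel. z \<in> X \<times> Y \<longrightarrow> g1 z \<bullet> (0, 1) - g2 z \<bullet> (0, 1) = 0"
    by (rule components, simp add: Basis_real_prod)+
  then show ?thesis
    by eventually_elim (auto simp: prod_eq_iff inner_prod_def)
qed

lemma set_borel_measurable_norm_sq_weak_grad:
  fixes u :: "real \<times> real \<Rightarrow> real"
  assumes "weak_grad U u g"
  shows "(\<lambda>z. indicator U z *\<^sub>R (norm (g z))\<^sup>2) \<in> borel_measurable lborel"
proof -
  have "(\<lambda>z. indicator U z *\<^sub>R (g z \<bullet> i)) \<in> borel_measurable lborel" if "i \<in> Basis" for i
    using assms that by (simp add: weak_grad_def L2_def set_borel_measurable_def)
  then have "(\<lambda>z. (indicator U z *\<^sub>R (g z \<bullet> (1, 0)))\<^sup>2 + (indicator U z *\<^sub>R (g z \<bullet> (0, 1)))\<^sup>2)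
      \<in> borel_measurable lborel"
    by (simp add: Basis_real_prod)
  moreover have "(indicator U z *\<^sub>R (g z \<bullet> (1, 0)))\<^sup>2 + (indicator U z *\<^sub>R (g z \<bullet> (0, 1)))\<^sup>2 =
      indicator U z *\<^sub>R (norm (g z))\<^sup>2" for z
    by (cases "g z") (simp add: indicator_def norm_Pair inner_prod_def)
  ultimately show ?thesis by simp
qed

lemma energy_test_fun:
  fixes f u :: "real \<times> real \<Rightarrow> real"
  assumes XY: "open X" "open Y" "bounded X" "bounded Y" and u: "test_fun (X \<times> Y) u"
  shows "energy (X \<times> Y) f u =
    1/2 * (LINT z:X \<times> Y|lborel. (norm (grad u z))\<^sup>2) - (LINT z:X \<times> Y|lborel. f z * u z)"
proof -
  have U: "open (X \<times> Y)" "bounded (X \<times> Y)"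
    using XY by (simp_all add: open_Times bounded_Times)
  have g: "weak_grad (X \<times> Y) u (grad u)"
    using u weak_grad_smooth[OF _ U integral_partial_vanishes_prod] by (simp add: test_fun_def)
  then have wg: "weak_grad (X \<times> Y) u (wgrad (X \<times> Y) u)"
    unfolding wgrad_def by (rule someI[of "weak_grad (X \<times> Y) u"])
  have "AE z in lborel. z \<in> X \<times> Y \<longrightarrow> wgrad (X \<times> Y) u z = grad u z"
    by (rule weak_grad_unique_AE[OF XY wg g])
  then have "AE z in lborel. indicator (X \<times> Y) z *\<^sub>R (norm (wgrad (X \<times> Y) u z))\<^sup>2 =
      indicator (X \<times> Y) z *\<^sub>R (norm (grad u z))\<^sup>2"
    by eventually_elim (simp add: indicator_def)
  then have "(LINT z:X \<times> Y|lborel. (norm (wgrad (X \<times> Y) u z))\<^sup>2) =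
      (LINT z:X \<times> Y|lborel. (norm (grad u z))\<^sup>2)"
    unfolding set_lebesgue_integral_def
    by (rule integral_cong_AE[OF set_borel_measurable_norm_sq_weak_grad[OF wg]
          set_borel_measurable_norm_sq_weak_grad[OF g]])
  then show ?thesis by (simp add: energy_def)
qed

lemma grad_cmult:
  assumes "u differentiable (at z)"
  shows "grad (\<lambda>z. c * u z) z = c *\<^sub>R grad u z"
proof -
  have "((\<lambda>z. c * u z) has_derivative (\<lambda>h. c * frechet_derivative u (at z) h)) (at z)"
    using assms by (intro has_derivative_mult_right) (simp add: frechet_derivative_works[symmetric])
  then show ?thesis
    by (simp add: grad_def frechet_derivative_at[symmetric] scaleR_sum_right)
qed

text \<open>With \<open>A = \<integral>|\<nabla>(r \<otimes> s)|\<^sup>2\<close> and \<open>B = \<integral>f (r \<otimes> s)\<close>, the choice \<open>c = B / (A + 1)\<close> gives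
  \<open>\<E>(c r \<otimes> s) = c\<^sup>2 A / 2 - c B = - c\<^sup>2 (A / 2 + 1)\<close>.\<close>
lemma energy_scaled_tensor_negative:
  fixes f :: "real \<times> real \<Rightarrow> real"
  assumes XY: "open X" "open Y" "bounded X" "bounded Y"
    and rs: "real_smooth r" "real_smooth s" "test_fun X r" "test_fun Y s"
    and B: "(LINT z:X \<times> Y|lborel. f z * tensor r s z) \<noteq> 0"
  obtains c where "c \<noteq> 0" "energy (X \<times> Y) f (tensor (\<lambda>x. c * r x) s) < 0"
proof -
  define A where "A = (LINT z:X \<times> Y|lborel. (norm (grad (tensor r s) z))\<^sup>2)"
  define c where "c = (LINT z:X \<times> Y|lborel. f z * tensor r s z) / (A + 1)"
  have "A \<ge> 0"
    unfolding A_def set_lebesgue_integral_def by (rule integral_nonneg_AE) simp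
  with B have c: "c \<noteq> 0" "c * (A + 1) = (LINT z:X \<times> Y|lborel. f z * tensor r s z)"
    by (simp_all add: c_def)
  have scaled: "tensor (\<lambda>x. c * r x) s = (\<lambda>z. c * tensor r s z)"
    by (simp add: tensor_def fun_eq_iff case_prod_beta)
  have "(norm (grad (tensor (\<lambda>x. c * r x) s) z))\<^sup>2 = c\<^sup>2 * (norm (grad (tensor r s) z))\<^sup>2" for z
    using grad_cmult[OF smooth_differentiable[OF smooth_tensor[OF rs(1,2)]]]
    by (simp add: scaled power_mult_distrib)
  then have "(LINT z:X \<times> Y|lborel. (norm (grad (tensor (\<lambda>x. c * r x) s) z))\<^sup>2) = c\<^sup>2 * A"
    by (simp add: A_def)
  moreover have "(LINT z:X \<times> Y|lborel. f z * tensor (\<lambda>x. c * r x) s z) = c * (c * (A + 1))"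
    unfolding scaled c(2) by (simp add: mult.left_commute)
  moreover have "test_fun (X \<times> Y) (tensor (\<lambda>x. c * r x) s)"
    using rs c(1) by (intro test_fun_tensor) (simp_all add: real_smooth_cmult test_fun_cmult)
  ultimately have "energy (X \<times> Y) f (tensor (\<lambda>x. c * r x) s) = 1/2 * (c\<^sup>2 * A) - c * (c * (A + 1))"
    using energy_test_fun[OF XY] by simp
  also have "\<dots> = - (c\<^sup>2 * (A / 2 + 1))"
    by (simp add: power2_eq_square algebra_simps)
  also have "\<dots> < 0"
    using c(1) \<open>A \<ge> 0\<close> by (simp add: mult_pos_pos)
  finally show ?thesis using c(1) that by blast
qed

theorem lemma3:
  fixes \<Omega>x \<Omega>y :: "real set" and f :: "real \<times> real \<Rightarrow> real"
  assumes "open \<Omega>x" "connected \<Omega>x" "bounded \<Omega>x" "\<Omega>x \<noteq> {}"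
      and "open \<Omega>y" "connected \<Omega>y" "bounded \<Omega>y" "\<Omega>y \<noteq> {}"
      and "L2 (\<Omega>x \<times> \<Omega>y) f"
      and "\<not> (AE z in lborel. z \<in> \<Omega>x \<times> \<Omega>y \<longrightarrow> f z = 0)"
  shows "\<exists>r s. H10 \<Omega>x r \<and> H10 \<Omega>y s \<and> H10 (\<Omega>x \<times> \<Omega>y) (tensor r s) \<and>
           energy (\<Omega>x \<times> \<Omega>y) f (tensor r s) < 0"
proof -
  have \<Omega>: "open (\<Omega>x \<times> \<Omega>y)" "bounded (\<Omega>x \<times> \<Omega>y)"
    using assms by (simp_all add: open_Times bounded_Times)
  then have "set_integrable lborel (\<Omega>x \<times> \<Omega>y) f"
    using assms(9) by (intro L2_imp_set_integrable) simp_all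
  then have "\<not> orthogonal_to_tensor_tests \<Omega>x \<Omega>y f"
    using AE_eq_0_if_orthogonal_to_tensor_tests assms(1,5,10) by blast
  then obtain r s where rs: "real_smooth r" "real_smooth s" "test_fun \<Omega>x r" "test_fun \<Omega>y s"
    and "(LINT z:\<Omega>x \<times> \<Omega>y|lborel. f z * tensor r s z) \<noteq> 0"
    unfolding orthogonal_to_tensor_tests_def by blast
  then obtain c where c: "c \<noteq> 0" "energy (\<Omega>x \<times> \<Omega>y) f (tensor (\<lambda>x. c * r x) s) < 0"
    using energy_scaled_tensor_negative[OF assms(1,5,3,7) rs] by blast
  have r': "real_smooth (\<lambda>x. c * r x)" "test_fun \<Omega>x (\<lambda>x. c * r x)"
    using rs c(1) by (simp_all add: real_smooth_cmult test_fun_cmult)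
  show ?thesis
    using H10_test_fun[OF r'(2) assms(1,3)] H10_test_fun[OF rs(4) assms(5,7)]
      H10_test_fun[OF test_fun_tensor[OF r'(1) rs(2) r'(2) rs(4)] \<Omega>] c(2)
      integral_partial_vanishes_real integral_partial_vanishes_prod
    by auto
qed

end
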